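(* Let $\Omega\subset\mathbb{R}^d$ be a bounded domain, $\kappa\in L^\infty(\Omega)$ with $\kappa\ge\kappa_0>0$, $a(u,v)=\int_\Omega\kappa\nabla u\cdot\nabla v\,dx$, $\|u\|_a^2=a(u,u)$. Let $V_{H,1},V_{H,2}\subset H^1_0(\Omega)$ be finite-dimensional, $L^2(\Omega)$-orthogonal subspaces, and $\tau>0$. Define $(u,v)_{m_\tau}=(u,v)+\frac{\tau^2}{2}a(u,v)$, $\|v\|_{m_\tau}^2=(v,v)_{m_\tau}$, and operators $b_\tau:V_{H,1}\to V_{H,1}$, $c_\tau:V_{H,1}+V_{H,2}\to V_{H,1}$, $d_\tau:V_{H,1}+V_{H,2}\to V_{H,1}$ by $$(b_\tau(v_1),v)_{m_\tau}=(v_1,v),\quad (c_\tau(u),v)_{m_\tau}=\frac{\tau^2}{2}a(u,v),\quad a(d_\tau(u),v)=a(u,v)\qquad\forall v\in V_{H,1}.$$ Define for $v_1,v\in V_{H,1}$: $(v_1,v)_{s_\tau}=(v_1,v)-(b_\tau(v_1),b_\tau(v))_{m_\tau}$, $\|v_1\|_{s_\tau}^2=(v_1,v_1)_{s_\tau}$, and for $v_2\in V_{H,2}$: $\|v_2\|_{n_\tau}^2=\frac{\tau^2}{2}\|v_2\|_a^2-\|c_\tau(v_2)\|_{m_\tau}^2-\|d_\tau(v_2)\|_{s_\tau}^2$. Then for all $u_1\in V_{H,1}$ and $u_2\in V_{H,2}$, $$\|u_1\|^2+\frac{\tau^2}{2}\|u_2\|_a^2-\|b_\tau(u_1)-c_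\tau(u_2)\|_{m_\tau}^2=\|u_1+d_\tau(u_2)\|_{s_\tau}^2+\|u_2\|_{n_\tau}^2.$$
   Context: $(\cdot,\cdot)$ and $\|\cdot\|$ denote the $L^2(\Omega)$ inner product and norm. *)

theory Defs
  imports "HOL-Analysis.Analysis"
begin

text \<open>Setting: functions on R^d are modelled as maps on an arbitrary Euclidean space 'a.
  All integrals are Lebesgue integrals over the domain.\<close>

fun iter_deriv :: "('a::euclidean_space \<Rightarrow> real) \<Rightarrow> 'a list \<Rightarrow> 'a \<Rightarrow> real" where
  "iter_deriv f [] = f"
| "iter_deriv f (e # es) = (\<lambda>x. frechet_derivative (iter_deriv f es) (at x) e)"

definition smooth :: "('a::euclidean_space \<Rightarrow> real) \<Rightarrow> bool" where
  "smooth f \<longleftrightarrow> (\<forall>es. set es \<subseteq> Basis \<longrightarrow> (\<forall>x. iter_deriv f es differentiable (at x)))"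

definition tsupport :: "('a::euclidean_space \<Rightarrow> real) \<Rightarrow> 'a set" where
  "tsupport f = closure {x. f x \<noteq> 0}"

text \<open>Test functions C_c^infinity(Omega) (extended by zero to the whole space).\<close>
definition test_fun :: "'a::euclidean_space set \<Rightarrow> ('a \<Rightarrow> real) \<Rightarrow> bool" where
  "test_fun \<Omega> \<phi> \<longleftrightarrow> smooth \<phi> \<and> compact (tsupport \<phi>) \<and> tsupport \<phi> \<subseteq> \<Omega>"

definition cgrad :: "('a::euclidean_space \<Rightarrow> real) \<Rightarrow> 'a \<Rightarrow> 'a" where
  "cgrad f x = (\<Sum>i\<in>Basis. frechet_derivative f (at x) i *\<^sub>R i)"

definition L2fun :: "'a::euclidean_space set \<Rightarrow> ('a \<Rightarrow> real) \<Rightarrow> bool" where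
  "L2fun \<Omega> u \<longleftrightarrow> set_borel_measurable lebesgue \<Omega> u \<and> set_integrable lebesgue \<Omega> (\<lambda>x. (u x)^2)"

definition L2ip :: "'a::euclidean_space set \<Rightarrow> ('a \<Rightarrow> real) \<Rightarrow> ('a \<Rightarrow> real) \<Rightarrow> real" where
  "L2ip \<Omega> u v = (\<integral>x\<in>\<Omega>. u x * v x \<partial>lebesgue)"

definition is_weak_grad :: "'a::euclidean_space set \<Rightarrow> ('a \<Rightarrow> real) \<Rightarrow> ('a \<Rightarrow> 'a) \<Rightarrow> bool" where
  "is_weak_grad \<Omega> u g \<longleftrightarrow>
     (\<forall>\<phi>. test_fun \<Omega> \<phi> \<longrightarrow> (\<forall>i\<in>Basis.
        (\<integral>x\<in>\<Omega>. u x * frechet_derivative \<phi> (at x) i \<partial>lebesgue)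
          = - (\<integral>x\<in>\<Omega>. (g x \<bullet> i) * \<phi> x \<partial>lebesgue)))"

definition H1_with_grad :: "'a::euclidean_space set \<Rightarrow> ('a \<Rightarrow> real) \<Rightarrow> ('a \<Rightarrow> 'a) \<Rightarrow> bool" where
  "H1_with_grad \<Omega> u g \<longleftrightarrow> L2fun \<Omega> u \<and> (\<forall>i\<in>Basis. L2fun \<Omega> (\<lambda>x. g x \<bullet> i)) \<and> is_weak_grad \<Omega> u g"

text \<open>The weak gradient (unique up to null sets; any choice gives the same integrals).\<close>
definition wgrad :: "'a::euclidean_space set \<Rightarrow> ('a \<Rightarrow> real) \<Rightarrow> 'a \<Rightarrow> 'a" where
  "wgrad \<Omega> u = (SOME g. H1_with_grad \<Omega> u g)"

definition H10 :: "'a::euclidean_space set \<Rightarrow> ('a \<Rightarrow> real) set" where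
  "H10 \<Omega> = {u. \<exists>g. H1_with_grad \<Omega> u g \<and>
      (\<exists>\<phi>. (\<forall>n. test_fun \<Omega> (\<phi> n)) \<and>
         ((\<lambda>n. (\<integral>x\<in>\<Omega>. (u x - \<phi> n x)^2 \<partial>lebesgue)
              + (\<integral>x\<in>\<Omega>. (norm (g x - cgrad (\<phi> n) x))^2 \<partial>lebesgue)) \<longlonglongrightarrow> 0))}"

definition abil :: "'a::euclidean_space set \<Rightarrow> ('a \<Rightarrow> real) \<Rightarrow> ('a \<Rightarrow> real) \<Rightarrow> ('a \<Rightarrow> real) \<Rightarrow> real" where
  "abil \<Omega> \<kappa> u v = (\<integral>x\<in>\<Omega>. \<kappa> x * (wgrad \<Omega> u x \<bullet> wgrad \<Omega> v x) \<partial>lebesgue)"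

definition fun_subspace :: "('a \<Rightarrow> real) set \<Rightarrow> bool" where
  "fun_subspace V \<longleftrightarrow> (\<lambda>x. 0) \<in> V \<and> (\<forall>u\<in>V. \<forall>v\<in>V. (\<lambda>x. u x + v x) \<in> V)
      \<and> (\<forall>c. \<forall>u\<in>V. (\<lambda>x. c * u x) \<in> V)"

definition fin_dim_fun :: "('a \<Rightarrow> real) set \<Rightarrow> bool" where
  "fin_dim_fun V \<longleftrightarrow> (\<exists>B. finite B \<and> B \<subseteq> V \<and> (\<forall>u\<in>V. \<exists>c. u = (\<lambda>x. \<Sum>b\<in>B. c b * b x)))"

definition sum_space :: "('a \<Rightarrow> real) set \<Rightarrow> ('a \<Rightarrow> real) set \<Rightarrow> ('a \<Rightarrow> real) set" where
  "sum_space V W = {(\<lambda>x. v x + w x) | v w. v \<in> V \<and> w \<in> W}"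

definition m_ip :: "'a::euclidean_space set \<Rightarrow> ('a \<Rightarrow> real) \<Rightarrow> real \<Rightarrow> ('a \<Rightarrow> real) \<Rightarrow> ('a \<Rightarrow> real) \<Rightarrow> real" where
  "m_ip \<Omega> \<kappa> \<tau> u v = L2ip \<Omega> u v + \<tau>^2 / 2 * abil \<Omega> \<kappa> u v"

definition s_ip :: "'a::euclidean_space set \<Rightarrow> ('a \<Rightarrow> real) \<Rightarrow> real \<Rightarrow> (('a \<Rightarrow> real) \<Rightarrow> ('a \<Rightarrow> real))
                    \<Rightarrow> ('a \<Rightarrow> real) \<Rightarrow> ('a \<Rightarrow> real) \<Rightarrow> real" where
  "s_ip \<Omega> \<kappa> \<tau> b v1 v = L2ip \<Omega> v1 v - m_ip \<Omega> \<kappa> \<tau> (b v1) (b v)"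

definition n_sq :: "'a::euclidean_space set \<Rightarrow> ('a \<Rightarrow> real) \<Rightarrow> real \<Rightarrow> (('a \<Rightarrow> real) \<Rightarrow> ('a \<Rightarrow> real))
     \<Rightarrow> (('a \<Rightarrow> real) \<Rightarrow> ('a \<Rightarrow> real)) \<Rightarrow> (('a \<Rightarrow> real) \<Rightarrow> ('a \<Rightarrow> real)) \<Rightarrow> ('a \<Rightarrow> real) \<Rightarrow> real" where
  "n_sq \<Omega> \<kappa> \<tau> b c d v2 = \<tau>^2 / 2 * abil \<Omega> \<kappa> v2 v2 - m_ip \<Omega> \<kappa> \<tau> (c v2) (c v2)
      - s_ip \<Omega> \<kappa> \<tau> b (d v2) (d v2)"

end

theory Submission
  imports Defs
begin

(* The identity is pure algebra once the forms involved are symmetric and bilinear on V_{H,1}.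
   Expanding the m-norm of b u1 - c u2 and the s-norm of u1 + d u2, the defining relations of
   b, c, d together with the self-adjointness (v, b w) = (w, b v) reduce it to the cross-term
   identity (u1, d u2)_s = (b u1, c u2)_m.

   The only analytic input is linearity of a(u, v) in u.  Since wgrad picks an arbitrary weak
   gradient, this needs uniqueness of weak gradients almost everywhere, i.e. the fundamental
   lemma of the calculus of variations.  It is proved by approximating indicators of boxes with
   smooth bumps built from exp(-1/t) and applying Lebesgue's differentiation theorem. *)

section \<open>Smooth bump functions\<close>

definition exp_neg_inv :: "nat \<Rightarrow> real \<Rightarrow> real" where
  "exp_neg_inv n t = (if t > 0 then exp (- 1 / t) / t ^ n else 0)"

lemma exp_neg_inv_tendsto_0: "(exp_neg_inv n \<longlongrightarrow> 0) (at_right 0)"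
proof -
  have "((\<lambda>t::real. inverse t ^ n / exp (inverse t)) \<longlongrightarrow> 0) (at_right 0)"
    by (rule filterlim_compose[OF tendsto_power_div_exp_0 filterlim_inverse_at_top_right])
  moreover have "\<forall>\<^sub>F t in at_right 0. inverse t ^ n / exp (inverse t) = exp_neg_inv n t"
    using eventually_at_right_less[of "0::real"]
    by eventually_elim (simp add: exp_neg_inv_def exp_minus divide_inverse power_inverse mult.commute)
  ultimately show ?thesis by (rule Lim_transform_eventually)
qed

lemma exp_neg_inv_pos: "t > 0 \<Longrightarrow> exp_neg_inv n t = exp (- inverse t) * inverse t ^ n"
  by (simp add: exp_neg_inv_def divide_inverse power_inverse)

lemma exp_neg_inv_nonpos: "t \<le> 0 \<Longrightarrow> exp_neg_inv n t = 0"
  by (simp add: exp_neg_inv_def)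

lemma exp_neg_inv_has_real_derivative_pos:
  assumes "t > 0"
  shows "(exp_neg_inv n has_real_derivative
           exp_neg_inv (n + 2) t - real n * exp_neg_inv (n + 1) t) (at t)"
proof -
  have inv: "(inverse has_real_derivative - (inverse t ^ 2)) (at t)"
    using DERIV_inverse[of t UNIV] assms by (simp add: numeral_2_eq_2)
  have "((\<lambda>s. exp (- inverse s) * inverse s ^ n) has_real_derivative
      exp (- inverse t) * inverse t ^ 2 * inverse t ^ n
      + real n * inverse t ^ (n - 1) * - (inverse t ^ 2) * exp (- inverse t)) (at t)"
    using DERIV_mult[OF DERIV_fun_exp[OF DERIV_minus[OF inv]] DERIV_power[OF inv, of n]]
    by (simp add: mult_ac)
  also have "exp (- inverse t) * inverse t ^ 2 * inverse t ^ n
      + real n * inverse t ^ (n - 1) * - (inverse t ^ 2) * exp (- inverse t)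
      = exp_neg_inv (n + 2) t - real n * exp_neg_inv (n + 1) t"
    using assms by (cases n) (simp_all add: exp_neg_inv_pos algebra_simps power_add power2_eq_square)
  finally show ?thesis
    by (rule has_field_derivative_transform_within_open[of _ _ _ "{0<..}"])
       (use assms in \<open>auto simp: exp_neg_inv_pos\<close>)
qed

lemma exp_neg_inv_has_real_derivative_0: "(exp_neg_inv n has_real_derivative 0) (at 0)"
proof -
  have "((\<lambda>s. exp_neg_inv n s / s) \<longlongrightarrow> 0) (at_left 0)"
  proof (rule Lim_transform_eventually[OF tendsto_const])
    show "\<forall>\<^sub>F s in at_left (0::real). 0 = exp_neg_inv n s / s"
      by (simp add: eventually_at_filter exp_neg_inv_def)
  qed
  moreover have "((\<lambda>s. exp_neg_inv n s / s) \<longlongrightarrow> 0) (at_right 0)"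
  proof (rule Lim_transform_eventually[OF exp_neg_inv_tendsto_0[of "n + 1"]])
    show "\<forall>\<^sub>F s in at_right 0. exp_neg_inv (n + 1) s = exp_neg_inv n s / s"
      using eventually_at_right_less[of "0::real"] by eventually_elim (simp add: exp_neg_inv_def)
  qed
  ultimately have "((\<lambda>s. exp_neg_inv n s / s) \<longlongrightarrow> 0) (at 0)"
    by (rule filterlim_split_at)
  then show ?thesis
    unfolding DERIV_def by (simp add: exp_neg_inv_nonpos)
qed

lemma exp_neg_inv_has_real_derivative:
  "(exp_neg_inv n has_real_derivative exp_neg_inv (n + 2) t - real n * exp_neg_inv (n + 1) t) (at t)"
proof (cases "t > 0")
  case True
  then show ?thesis by (rule exp_neg_inv_has_real_derivative_pos)
next
  case False
  have "(exp_neg_inv n has_real_derivative 0) (at t)"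
  proof (cases "t = 0")
    case False
    with \<open>\<not> t > 0\<close> have "t < 0" by simp
    show ?thesis
      by (rule has_field_derivative_transform_within_open[OF DERIV_const, of "{..<0}"])
         (use \<open>t < 0\<close> in \<open>auto simp: exp_neg_inv_nonpos\<close>)
  qed (simp add: exp_neg_inv_has_real_derivative_0)
  with False show ?thesis by (simp add: exp_neg_inv_nonpos)
qed

text \<open>Derivatives of \<open>exp_neg_inv n\<close> stay in the span of the family, so this algebra is closed
  under directional derivatives and all its members are smooth.\<close>
inductive_set elem_smooth :: "('a::euclidean_space \<Rightarrow> real) set" where
  const: "(\<lambda>x. c) \<in> elem_smooth"
| ridge: "(\<lambda>x. exp_neg_inv n (x \<bullet> e + c)) \<in> elem_smooth"
| add: "f \<in> elem_smooth \<Longrightarrow> g \<in> elem_smooth \<Longrightarrow> (\<lambda>x. f x + g x) \<in> elem_smooth"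
| mult: "f \<in> elem_smooth \<Longrightarrow> g \<in> elem_smooth \<Longrightarrow> (\<lambda>x. f x * g x) \<in> elem_smooth"

lemma elem_smooth_has_derivative:
  assumes "f \<in> elem_smooth"
  obtains D where "\<And>x. (f has_derivative D x) (at x)" and "\<And>v. (\<lambda>x. D x v) \<in> elem_smooth"
  using assms
proof (induction arbitrary: thesis)
  case (const c)
  show ?case by (rule const.prems[of "\<lambda>x v. 0"]) (auto intro: elem_smooth.const)
next
  case (ridge n e c)
  define F where "F t = exp_neg_inv (n + 2) t - real n * exp_neg_inv (n + 1) t" for t
  show ?case
  proof (rule ridge.prems[of "\<lambda>x v. F (x \<bullet> e + c) * (v \<bullet> e)"])
    fix x :: 'a
    have inner: "((\<lambda>x. x \<bullet> e + c) has_derivative (\<lambda>v. v \<bullet> e)) (at x)"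
      by (auto intro!: derivative_eq_intros)
    have "(exp_neg_inv n has_derivative (\<lambda>h. F (x \<bullet> e + c) * h)) (at (x \<bullet> e + c))"
      using exp_neg_inv_has_real_derivative unfolding F_def has_field_derivative_def by blast
    from has_derivative_compose[OF inner this]
    show "((\<lambda>x. exp_neg_inv n (x \<bullet> e + c)) has_derivative (\<lambda>v. F (x \<bullet> e + c) * (v \<bullet> e))) (at x)"
      by simp
  next
    fix v :: 'a
    have "(\<lambda>x. (exp_neg_inv (n + 2) (x \<bullet> e + c)
        + (\<lambda>_. - real n) x * exp_neg_inv (n + 1) (x \<bullet> e + c)) * (\<lambda>_. v \<bullet> e) x) \<in> elem_smooth"
      by (intro elem_smooth.intros)
    then show "(\<lambda>x. F (x \<bullet> e + c) * (v \<bullet> e)) \<in> elem_smooth" by (simp add: F_def)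
  qed
next
  case (add f g)
  obtain Df where Df: "\<And>x. (f has_derivative Df x) (at x)" "\<And>v. (\<lambda>x. Df x v) \<in> elem_smooth"
    using add.IH(1) by blast
  obtain Dg where Dg: "\<And>x. (g has_derivative Dg x) (at x)" "\<And>v. (\<lambda>x. Dg x v) \<in> elem_smooth"
    using add.IH(2) by blast
  from Df Dg show ?case
    by (intro add.prems[of "\<lambda>x v. Df x v + Dg x v"]) (auto intro!: has_derivative_add elem_smooth.add)
next
  case (mult f g)
  obtain Df where Df: "\<And>x. (f has_derivative Df x) (at x)" "\<And>v. (\<lambda>x. Df x v) \<in> elem_smooth"
    using mult.IH(1) by blast
  obtain Dg where Dg: "\<And>x. (g has_derivative Dg x) (at x)" "\<And>v. (\<lambda>x. Dg x v) \<in> elem_smooth"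
    using mult.IH(2) by blast
  from Df Dg mult.hyps show ?case
    by (intro mult.prems[of "\<lambda>x v. f x * Dg x v + Df x v * g x"])
       (auto intro!: has_derivative_mult elem_smooth.add elem_smooth.mult)
qed

lemma elem_smooth_differentiable:
  assumes "f \<in> elem_smooth"
  shows "f differentiable (at x)"
  using elem_smooth_has_derivative[OF assms] unfolding differentiable_def by blast

lemma elem_smooth_frechet_derivative:
  assumes "f \<in> elem_smooth"
  shows "(\<lambda>x. frechet_derivative f (at x) v) \<in> elem_smooth"
proof -
  obtain D where D: "\<And>x. (f has_derivative D x) (at x)" "\<And>v. (\<lambda>x. D x v) \<in> elem_smooth"
    using elem_smooth_has_derivative[OF assms] by blast
  have "frechet_derivative f (at x) = D x" for x
    using D(1) by (rule frechet_derivative_at[symmetric])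
  with D(2) show ?thesis by simp
qed

lemma elem_smooth_iter_deriv: "f \<in> elem_smooth \<Longrightarrow> iter_deriv f es \<in> elem_smooth"
  by (induction es) (auto intro: elem_smooth_frechet_derivative)

lemma elem_smooth_imp_smooth: "f \<in> elem_smooth \<Longrightarrow> smooth f"
  unfolding smooth_def using elem_smooth_iter_deriv elem_smooth_differentiable by blast

lemma elem_smooth_continuous: "f \<in> elem_smooth \<Longrightarrow> continuous_on UNIV f"
  by (meson continuous_at_imp_continuous_on differentiable_imp_continuous_within elem_smooth_differentiable)

lemma elem_smooth_prod:
  "finite A \<Longrightarrow> (\<And>i. i \<in> A \<Longrightarrow> f i \<in> elem_smooth) \<Longrightarrow> (\<lambda>x. \<Prod>i\<in>A. f i x) \<in> elem_smooth"
  by (induction A rule: finite_induct) (auto intro: elem_smooth.intros)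

lemma elem_smooth_power: "f \<in> elem_smooth \<Longrightarrow> (\<lambda>x. f x ^ k) \<in> elem_smooth"
  by (induction k) (auto intro: elem_smooth.intros)

lemma exp_neg_inv_0_bounds: "0 \<le> exp_neg_inv 0 t" "exp_neg_inv 0 t \<le> 1"
  by (simp_all add: exp_neg_inv_def)

lemma exp_neg_inv_0_pos_iff: "0 < exp_neg_inv 0 t \<longleftrightarrow> 0 < t"
  by (simp add: exp_neg_inv_def)

definition box_bump :: "'a::euclidean_space \<Rightarrow> 'a \<Rightarrow> 'a \<Rightarrow> real" where
  "box_bump a b x = (\<Prod>i\<in>Basis. exp_neg_inv 0 (x \<bullet> i - a \<bullet> i) * exp_neg_inv 0 (b \<bullet> i - x \<bullet> i))"

lemma box_bump_elem_smooth: "box_bump a b \<in> elem_smooth"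
proof -
  have "(\<lambda>x. \<Prod>i\<in>Basis. exp_neg_inv 0 (x \<bullet> i + - (a \<bullet> i)) * exp_neg_inv 0 (x \<bullet> (- i) + b \<bullet> i))
      \<in> elem_smooth"
    by (intro elem_smooth_prod elem_smooth.mult elem_smooth.ridge) auto
  then show ?thesis unfolding box_bump_def[abs_def] by simp
qed

lemma box_bump_bounds: "0 \<le> box_bump a b x" "box_bump a b x \<le> 1"
  unfolding box_bump_def
  by (intro prod_nonneg prod_le_1 conjI mult_nonneg_nonneg mult_le_one exp_neg_inv_0_bounds)+

lemma box_bump_pos_iff: "0 < box_bump a b x \<longleftrightarrow> x \<in> box a b"
proof
  assume "x \<in> box a b"
  then show "0 < box_bump a b x"
    unfolding box_bump_def mem_box by (intro prod_pos mult_pos_pos) (auto simp: exp_neg_inv_0_pos_iff)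
next
  assume pos: "0 < box_bump a b x"
  show "x \<in> box a b" unfolding mem_box
  proof
    fix i :: 'a assume i: "i \<in> Basis"
    have "box_bump a b x \<noteq> 0" using pos by simp
    then have "exp_neg_inv 0 (x \<bullet> i - a \<bullet> i) * exp_neg_inv 0 (b \<bullet> i - x \<bullet> i) \<noteq> 0"
      using i prod_zero_iff[OF finite_Basis] unfolding box_bump_def by blast
    then show "a \<bullet> i < x \<bullet> i \<and> x \<bullet> i < b \<bullet> i"
      by (auto simp: exp_neg_inv_def split: if_splits)
  qed
qed

text \<open>Since \<open>box_bump a b\<close> is positive exactly on the box, these smooth functions increase
  pointwise to its indicator.\<close>
definition box_approx :: "'a::euclidean_space \<Rightarrow> 'a \<Rightarrow> nat \<Rightarrow> 'a \<Rightarrow> real" where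
  "box_approx a b k x = 1 - (1 - box_bump a b x) ^ k"

lemma box_approx_elem_smooth: "box_approx a b k \<in> elem_smooth"
proof -
  have "(\<lambda>x. (\<lambda>_. 1) x + (\<lambda>_. - 1) x * ((\<lambda>_. 1) x + (\<lambda>_. - 1) x * box_bump a b x) ^ k) \<in> elem_smooth"
    by (intro elem_smooth.add elem_smooth.mult elem_smooth.const elem_smooth_power box_bump_elem_smooth)
  then show ?thesis unfolding box_approx_def[abs_def] by simp
qed

lemma box_approx_abs_le_1: "\<bar>box_approx a b k x\<bar> \<le> 1"
  using box_bump_bounds[of a b x] power_le_one[of "1 - box_bump a b x" k]
  unfolding box_approx_def by auto

lemma box_approx_eq_0:
  assumes "x \<notin> box a b"
  shows "box_approx a b k x = 0"
proof -
  from assms have "box_bump a b x = 0" using box_bump_pos_iff box_bump_bounds(1) by (metis less_eq_real_def)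
  then show ?thesis by (simp add: box_approx_def)
qed

lemma box_approx_tendsto_indicator: "(\<lambda>k. box_approx a b k x) \<longlonglongrightarrow> indicator (box a b) x"
proof (cases "x \<in> box a b")
  case True
  then have "\<bar>1 - box_bump a b x\<bar> < 1" using box_bump_pos_iff box_bump_bounds[of a b x] by auto
  then have "(\<lambda>k. 1 - (1 - box_bump a b x) ^ k) \<longlonglongrightarrow> 1 - 0"
    by (intro tendsto_diff tendsto_const LIMSEQ_power_zero) simp
  then show ?thesis using True by (simp add: box_approx_def)
qed (simp add: box_approx_eq_0)

lemma test_fun_box_approx:
  assumes "cbox a b \<subseteq> \<Omega>"
  shows "test_fun \<Omega> (box_approx a b k)"
proof -
  have "{x. box_approx a b k x \<noteq> 0} \<subseteq> cbox a b"
    using box_approx_eq_0[of _ a b k] box_subset_cbox[of a b] by blast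
  then have sub: "tsupport (box_approx a b k) \<subseteq> cbox a b"
    unfolding tsupport_def by (intro closure_minimal) auto
  have "closed (tsupport (box_approx a b k))" by (simp add: tsupport_def)
  then have "compact (tsupport (box_approx a b k))"
    using sub by (meson bounded_cbox bounded_subset compact_eq_bounded_closed)
  then show ?thesis
    using elem_smooth_imp_smooth[OF box_approx_elem_smooth] order_trans[OF sub assms]
    by (simp add: test_fun_def)
qed

section \<open>The fundamental lemma of the calculus of variations\<close>

lemma continuous_on_imp_borel_measurable_lebesgue:
  fixes f :: "'a::euclidean_space \<Rightarrow> real"
  shows "continuous_on UNIV f \<Longrightarrow> f \<in> borel_measurable lebesgue"
  using continuous_imp_measurable_on_sets_lebesgue[of UNIV f] by simp

lemma set_integral_box_eq_0_if_orthogonal_test_funs: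
  fixes h :: "'a::euclidean_space \<Rightarrow> real"
  assumes h: "set_integrable lebesgue \<Omega> h"
    and orth: "\<And>\<phi>. test_fun \<Omega> \<phi> \<Longrightarrow> (\<integral>x\<in>\<Omega>. h x * \<phi> x \<partial>lebesgue) = 0"
    and sub: "cbox a b \<subseteq> \<Omega>"
  shows "(\<integral>x\<in>box a b. h x \<partial>lebesgue) = 0"
proof -
  have hI: "integrable lebesgue (\<lambda>x. indicator \<Omega> x * h x)"
    using h by (simp add: set_integrable_def)
  have "(\<lambda>k. \<integral>x\<in>\<Omega>. h x * box_approx a b k x \<partial>lebesgue)
      \<longlonglongrightarrow> (\<integral>x\<in>\<Omega>. h x * indicator (box a b) x \<partial>lebesgue)"
    unfolding set_lebesgue_integral_def
  proof (rule integral_dominated_convergence[where w = "\<lambda>x. \<bar>indicator \<Omega> x * h x\<bar>"])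
    have "(\<lambda>x. indicator \<Omega> x * h x * indicator (box a b) x) \<in> borel_measurable lebesgue"
      by (rule borel_measurable_times[OF borel_measurable_integrable[OF hI] borel_measurable_indicator])
         simp
    then show "(\<lambda>x. indicator \<Omega> x *\<^sub>R (h x * indicator (box a b) x)) \<in> borel_measurable lebesgue"
      by (simp add: mult.assoc)
    fix k
    have "(\<lambda>x. indicator \<Omega> x * h x * box_approx a b k x) \<in> borel_measurable lebesgue"
      by (rule borel_measurable_times[OF borel_measurable_integrable[OF hI]
            continuous_on_imp_borel_measurable_lebesgue[OF elem_smooth_continuous[OF box_approx_elem_smooth]]])
    then show "(\<lambda>x. indicator \<Omega> x *\<^sub>R (h x * box_approx a b k x)) \<in> borel_measurable lebesgue"
      by (simp add: mult.assoc)
    show "AE x in lebesgue. norm (indicator \<Omega> x *\<^sub>R (h x * box_approx a b k x)) \<le> \<bar>indicator \<Omega> x * h x\<bar>"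
    proof (rule AE_I2)
      fix x
      have "\<bar>h x\<bar> * \<bar>box_approx a b k x\<bar> \<le> \<bar>h x\<bar>"
        using box_approx_abs_le_1[of a b k x] by (intro mult_left_le) simp_all
      then show "norm (indicator \<Omega> x *\<^sub>R (h x * box_approx a b k x)) \<le> \<bar>indicator \<Omega> x * h x\<bar>"
        by (cases "x \<in> \<Omega>") (simp_all add: abs_mult)
    qed
  qed (use hI in \<open>auto intro!: AE_I2 tendsto_mult_left box_approx_tendsto_indicator\<close>)
  moreover have "(\<integral>x\<in>\<Omega>. h x * box_approx a b k x \<partial>lebesgue) = 0" for k
    using orth[OF test_fun_box_approx[OF sub]] .
  ultimately have "(\<integral>x\<in>\<Omega>. h x * indicator (box a b) x \<partial>lebesgue) = 0"
    by (simp add: LIMSEQ_const_iff)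
  moreover have "(\<integral>x\<in>\<Omega>. h x * indicator (box a b) x \<partial>lebesgue) = (\<integral>x\<in>box a b. h x \<partial>lebesgue)"
    unfolding set_lebesgue_integral_def
    using sub box_subset_cbox[of a b] by (intro Bochner_Integration.integral_cong) (auto simp: indicator_def)
  ultimately show ?thesis by simp
qed

lemma integral_cbox_eq_0_if_orthogonal_test_funs:
  fixes h :: "'a::euclidean_space \<Rightarrow> real"
  assumes h: "set_integrable lebesgue \<Omega> h"
    and orth: "\<And>\<phi>. test_fun \<Omega> \<phi> \<Longrightarrow> (\<integral>x\<in>\<Omega>. h x * \<phi> x \<partial>lebesgue) = 0"
    and sub: "cbox a b \<subseteq> \<Omega>"
  shows "integral (cbox a b) (\<lambda>x. indicator \<Omega> x * h x) = 0"
proof -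
  define H where "H = (\<lambda>x. indicator \<Omega> x * h x)"
  have "integrable lebesgue H"
    using h by (simp add: set_integrable_def H_def)
  then have "set_integrable lebesgue (box a b) H"
    unfolding set_integrable_def by (rule integrable_mult_indicator[rotated]) simp
  then have "(H has_integral (\<integral>x\<in>box a b. H x \<partial>lebesgue)) (box a b)"
    by (rule has_integral_set_lebesgue)
  moreover have "(\<integral>x\<in>box a b. H x \<partial>lebesgue) = (\<integral>x\<in>box a b. h x \<partial>lebesgue)"
    unfolding set_lebesgue_integral_def H_def using sub box_subset_cbox[of a b]
    by (intro Bochner_Integration.integral_cong) (auto simp: indicator_def)
  ultimately have "(H has_integral 0) (cbox a b)"
    using set_integral_box_eq_0_if_orthogonal_test_funs[OF h orth sub]
    by (simp add: has_integral_open_interval)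
  then show ?thesis unfolding H_def by (rule integral_unique)
qed

lemma cube_subset_ball:
  fixes x :: "'a::euclidean_space"
  assumes "real DIM('a) * \<delta> < r"
  shows "cbox x (x + \<delta> *\<^sub>R One) \<subseteq> ball x r"
proof
  fix y assume "y \<in> cbox x (x + \<delta> *\<^sub>R One)"
  then have "\<bar>(y - x) \<bullet> i\<bar> \<le> \<delta>" if "i \<in> Basis" for i
    using that by (auto simp: mem_box inner_add_left inner_diff_left)
  then have "(\<Sum>i\<in>Basis. \<bar>(y - x) \<bullet> i\<bar>) \<le> real DIM('a) * \<delta>"
    using sum_bounded_above[of Basis "\<lambda>i. \<bar>(y - x) \<bullet> i\<bar>" \<delta>] by simp
  with norm_le_l1[of "y - x"] assms show "y \<in> ball x r"
    by (simp add: dist_norm norm_minus_commute)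
qed

lemma AE_eq_0_if_orthogonal_test_funs:
  fixes h :: "'a::euclidean_space \<Rightarrow> real"
  assumes "open \<Omega>" and h: "set_integrable lebesgue \<Omega> h"
    and orth: "\<And>\<phi>. test_fun \<Omega> \<phi> \<Longrightarrow> (\<integral>x\<in>\<Omega>. h x * \<phi> x \<partial>lebesgue) = 0"
  shows "AE x in lebesgue. x \<in> \<Omega> \<longrightarrow> h x = 0"
proof -
  define H where "H = (\<lambda>x. indicator \<Omega> x * h x)"
  have HI: "integrable lebesgue H"
    using h by (simp add: set_integrable_def H_def)
  have cube_integral: "integral (cbox a b) H = 0" if "cbox a b \<subseteq> \<Omega>" for a b
    unfolding H_def using integral_cbox_eq_0_if_orthogonal_test_funs[OF h orth that] .
  have "H integrable_on cbox a b" for a b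
    using integrable_on_lebesgue[OF HI] integrable_on_subcbox by blast
  then obtain N where "negligible N"
    and N: "\<And>x e. x \<notin> N \<Longrightarrow> 0 < e \<Longrightarrow> \<exists>d>0. \<forall>\<delta>. 0 < \<delta> \<and> \<delta> < d \<longrightarrow>
        norm (integral (cbox x (x + \<delta> *\<^sub>R One)) H /\<^sub>R \<delta> ^ DIM('a) - H x) < e"
    by (rule integrable_ccontinuous_explicit) blast
  have "H x = 0" if "x \<in> \<Omega>" "x \<notin> N" for x
  proof (rule ccontr)
    assume "H x \<noteq> 0"
    obtain r where "r > 0" "ball x r \<subseteq> \<Omega>" using \<open>open \<Omega>\<close> \<open>x \<in> \<Omega>\<close> open_contains_ball by blast
    obtain d where "d > 0" and d: "\<And>\<delta>. 0 < \<delta> \<Longrightarrow> \<delta> < d \<Longrightarrow>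
        norm (integral (cbox x (x + \<delta> *\<^sub>R One)) H /\<^sub>R \<delta> ^ DIM('a) - H x) < norm (H x)"
      using N[OF \<open>x \<notin> N\<close>, of "norm (H x)"] \<open>H x \<noteq> 0\<close> by auto
    define \<delta> where "\<delta> = min d (r / real DIM('a)) / 2"
    have "0 < \<delta>" "\<delta> < d"
      using \<open>d > 0\<close> \<open>r > 0\<close> by (simp_all add: \<delta>_def)
    have "real DIM('a) * \<delta> \<le> real DIM('a) * (r / real DIM('a) / 2)"
      unfolding \<delta>_def by (intro mult_left_mono) simp_all
    then have "real DIM('a) * \<delta> < r" using \<open>r > 0\<close> by simp
    then have "integral (cbox x (x + \<delta> *\<^sub>R One)) H = 0"
      using cube_integral cube_subset_ball \<open>ball x r \<subseteq> \<Omega>\<close> by blast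
    then show False using d[OF \<open>0 < \<delta>\<close> \<open>\<delta> < d\<close>] by simp
  qed
  then have "{x \<in> space lebesgue. \<not> (x \<in> \<Omega> \<longrightarrow> h x = 0)} \<subseteq> N"
    by (auto simp: H_def)
  then show ?thesis
    using \<open>negligible N\<close> negligible_iff_null_sets by (blast intro: AE_I')
qed

section \<open>Square-integrable functions\<close>

lemma set_borel_measurable_mult:
  fixes f g :: "'a \<Rightarrow> real"
  assumes "set_borel_measurable M A f" "set_borel_measurable M A g"
  shows "set_borel_measurable M A (\<lambda>x. f x * g x)"
proof -
  have "(\<lambda>x. (indicator A x * f x) * (indicator A x * g x)) \<in> borel_measurable M"
    using borel_measurable_times assms unfolding set_borel_measurable_def by fastforce
  also have "(\<lambda>x. (indicator A x * f x) * (indicator A x * g x)) = (\<lambda>x. indicator A x * (f x * g x))"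
    by (auto simp: indicator_def)
  finally show ?thesis by (simp add: set_borel_measurable_def)
qed

lemma set_integrable_imp_set_borel_measurable:
  fixes f :: "'a \<Rightarrow> real"
  shows "set_integrable M A f \<Longrightarrow> set_borel_measurable M A f"
  unfolding set_integrable_def set_borel_measurable_def by (rule borel_measurable_integrable)

lemma set_integrable_mult_bounded:
  fixes f g :: "'a \<Rightarrow> real"
  assumes f: "set_integrable M A f" and g: "set_borel_measurable M A g"
    and bound: "AE x in M. x \<in> A \<longrightarrow> \<bar>g x\<bar> \<le> B"
  shows "set_integrable M A (\<lambda>x. g x * f x)"
proof (rule set_integrable_bound[where f = "\<lambda>x. B * f x"])
  show "set_integrable M A (\<lambda>x. B * f x)" using f by simp
  show "set_borel_measurable M A (\<lambda>x. g x * f x)"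
    using set_borel_measurable_mult[OF g set_integrable_imp_set_borel_measurable[OF f]] .
  show "AE x in M. x \<in> A \<longrightarrow> norm (g x * f x) \<le> norm (B * f x)"
    using bound
  proof eventually_elim
    case (elim x)
    show ?case
    proof
      assume "x \<in> A"
      then have "\<bar>g x\<bar> * \<bar>f x\<bar> \<le> \<bar>B\<bar> * \<bar>f x\<bar>"
        using elim by (intro mult_right_mono) auto
      then show "norm (g x * f x) \<le> norm (B * f x)" by (simp add: abs_mult)
    qed
  qed
qed

lemma set_integrable_mult_L2fun:
  assumes u: "L2fun \<Omega> u" and v: "L2fun \<Omega> v"
  shows "set_integrable lebesgue \<Omega> (\<lambda>x. u x * v x)"
proof (rule set_integrable_bound[where f = "\<lambda>x. (u x)^2 + (v x)^2"])
  show "set_integrable lebesgue \<Omega> (\<lambda>x. (u x)^2 + (v x)^2)"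
    using u v by (simp add: L2fun_def)
  show "set_borel_measurable lebesgue \<Omega> (\<lambda>x. u x * v x)"
    using u v by (simp add: L2fun_def set_borel_measurable_mult)
  have "\<bar>u x * v x\<bar> \<le> (u x)^2 + (v x)^2" for x
  proof -
    have "2 * (\<bar>u x\<bar> * \<bar>v x\<bar>) \<le> (u x)^2 + (v x)^2"
      using sum_squares_bound[of "\<bar>u x\<bar>" "\<bar>v x\<bar>"] by simp
    moreover have "0 \<le> \<bar>u x\<bar> * \<bar>v x\<bar>" by simp
    ultimately show ?thesis unfolding abs_mult by linarith
  qed
  then show "AE x in lebesgue. x \<in> \<Omega> \<longrightarrow> norm (u x * v x) \<le> norm ((u x)^2 + (v x)^2)"
    by simp
qed

lemma L2fun_diff:
  assumes u: "L2fun \<Omega> u" and v: "L2fun \<Omega> v"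
  shows "L2fun \<Omega> (\<lambda>x. u x - v x)"
proof -
  have "set_borel_measurable lebesgue \<Omega> (\<lambda>x. u x - v x)"
    using u v unfolding L2fun_def set_borel_measurable_def
    by (simp add: right_diff_distrib borel_measurable_diff)
  moreover have "set_integrable lebesgue \<Omega> (\<lambda>x. (u x)^2 + (v x)^2 - 2 * (u x * v x))"
    using u v set_integrable_mult_L2fun[OF u v] by (simp add: L2fun_def)
  moreover have "(u x)^2 + (v x)^2 - 2 * (u x * v x) = (u x - v x)^2" for x
    by (simp add: power2_eq_square algebra_simps)
  ultimately show ?thesis by (simp add: L2fun_def)
qed

lemma L2fun_imp_set_integrable:
  assumes "\<Omega> \<in> lmeasurable" "L2fun \<Omega> u"
  shows "set_integrable lebesgue \<Omega> u"
proof -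
  have "L2fun \<Omega> (\<lambda>x. 1)"
    using assms(1) absolutely_integrable_on_const[OF assms(1), of 1]
    by (simp add: L2fun_def set_borel_measurable_def borel_measurable_indicator)
  then show ?thesis using set_integrable_mult_L2fun[OF assms(2)] by fastforce
qed

lemma set_integrable_mult_continuous:
  fixes \<phi> :: "'a::euclidean_space \<Rightarrow> real"
  assumes "\<Omega> \<in> sets lebesgue" "bounded \<Omega>"
    and f: "set_integrable lebesgue \<Omega> f" and \<phi>: "continuous_on UNIV \<phi>"
  shows "set_integrable lebesgue \<Omega> (\<lambda>x. f x * \<phi> x)"
proof -
  have "compact (\<phi> ` closure \<Omega>)"
    using assms(2) \<phi> by (intro compact_continuous_image) (auto intro: continuous_on_subset)
  then obtain B where "\<forall>y\<in>\<phi> ` closure \<Omega>. norm y \<le> B"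
    using compact_imp_bounded bounded_iff by blast
  then have B: "\<bar>\<phi> x\<bar> \<le> B" if "x \<in> \<Omega>" for x
    using that closure_subset by auto
  have "set_borel_measurable lebesgue \<Omega> \<phi>"
    unfolding set_borel_measurable_def using assms(1)
    by (intro borel_measurable_scaleR borel_measurable_indicator
        continuous_on_imp_borel_measurable_lebesgue[OF \<phi>])
  then have "set_integrable lebesgue \<Omega> (\<lambda>x. \<phi> x * f x)"
    using B by (intro set_integrable_mult_bounded[OF f, where B = B] AE_I2) auto
  then show ?thesis by (simp add: mult.commute)
qed

lemma set_integrable_inner_L2fun:
  fixes f g :: "'a::euclidean_space \<Rightarrow> 'b::euclidean_space"
  assumes "\<And>i. i \<in> Basis \<Longrightarrow> L2fun \<Omega> (\<lambda>x. f x \<bullet> i)" "\<And>i. i \<in> Basis \<Longrightarrow> L2fun \<Omega> (\<lambda>x. g x \<bullet> i)"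
  shows "set_integrable lebesgue \<Omega> (\<lambda>x. f x \<bullet> g x)"
proof -
  have "integrable lebesgue (\<lambda>x. \<Sum>i\<in>Basis. indicator \<Omega> x * ((f x \<bullet> i) * (g x \<bullet> i)))"
    using set_integrable_mult_L2fun[OF assms(1) assms(2)]
    by (intro Bochner_Integration.integrable_sum) (simp add: set_integrable_def)
  moreover have "indicator \<Omega> x * (f x \<bullet> g x) = (\<Sum>i\<in>Basis. indicator \<Omega> x * ((f x \<bullet> i) * (g x \<bullet> i)))"
    for x
    by (subst euclidean_inner) (rule sum_distrib_left)
  ultimately show ?thesis
    by (simp add: set_integrable_def)
qed

lemma set_integral_cong_AE_integrable:
  fixes f g :: "'a \<Rightarrow> real"
  assumes "set_integrable M A f" "set_integrable M A g" and "AE x in M. x \<in> A \<longrightarrow> f x = g x"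
  shows "(LINT x:A|M. f x) = (LINT x:A|M. g x)"
proof -
  have "AE x in M. indicator A x *\<^sub>R f x = indicator A x *\<^sub>R g x"
    using assms(3) by eventually_elim (simp add: indicator_def)
  with assms(1,2) show ?thesis
    unfolding set_lebesgue_integral_def set_integrable_def
    by (intro integral_cong_AE borel_measurable_integrable)
qed

lemma L2ip_commute: "L2ip \<Omega> f g = L2ip \<Omega> g f"
  by (simp add: L2ip_def mult.commute)

lemma L2ip_add_left:
  assumes "L2fun \<Omega> f" "L2fun \<Omega> g" "L2fun \<Omega> h"
  shows "L2ip \<Omega> (\<lambda>x. f x + g x) h = L2ip \<Omega> f h + L2ip \<Omega> g h"
  unfolding L2ip_def distrib_right
  using assms by (intro set_integral_add(2) set_integrable_mult_L2fun)

lemma L2ip_diff_left: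
  assumes "L2fun \<Omega> f" "L2fun \<Omega> g" "L2fun \<Omega> h"
  shows "L2ip \<Omega> (\<lambda>x. f x - g x) h = L2ip \<Omega> f h - L2ip \<Omega> g h"
  unfolding L2ip_def left_diff_distrib
  using assms by (intro set_integral_diff(2) set_integrable_mult_L2fun)

lemma abil_commute: "abil \<Omega> \<kappa> f g = abil \<Omega> \<kappa> g f"
  by (simp add: abil_def inner_commute)

lemma m_ip_commute: "m_ip \<Omega> \<kappa> \<tau> f g = m_ip \<Omega> \<kappa> \<tau> g f"
  by (simp add: m_ip_def L2ip_commute abil_commute)

section \<open>Weak gradients\<close>

lemma test_fun_continuous:
  assumes "test_fun \<Omega> \<phi>"
  shows "continuous_on UNIV \<phi>"
    and "i \<in> Basis \<Longrightarrow> continuous_on UNIV (\<lambda>x. frechet_derivative \<phi> (at x) i)"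
proof -
  have diff: "iter_deriv \<phi> es differentiable (at x)" if "set es \<subseteq> Basis" for es x
    using assms that by (simp add: test_fun_def smooth_def)
  show "continuous_on UNIV \<phi>"
    using diff[of "[]"]
    by (auto intro!: continuous_at_imp_continuous_on differentiable_imp_continuous_within)
  show "continuous_on UNIV (\<lambda>x. frechet_derivative \<phi> (at x) i)" if "i \<in> Basis"
    using diff[of "[i]"] that
    by (auto intro!: continuous_at_imp_continuous_on differentiable_imp_continuous_within)
qed

lemma H1_with_grad_component_integrable:
  assumes "open \<Omega>" "bounded \<Omega>" and "H1_with_grad \<Omega> u g" and "i \<in> Basis"
  shows "set_integrable lebesgue \<Omega> (\<lambda>x. g x \<bullet> i)"
  using assms L2fun_imp_set_integrable[of \<Omega>] by (simp add: H1_with_grad_def bounded_set_imp_lmeasurable)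

lemma H1_with_grad_test_integrable:
  assumes "open \<Omega>" "bounded \<Omega>" and u: "H1_with_grad \<Omega> u g"
    and i: "i \<in> Basis" and \<phi>: "test_fun \<Omega> \<phi>"
  shows "set_integrable lebesgue \<Omega> (\<lambda>x. (g x \<bullet> i) * \<phi> x)"
    and "set_integrable lebesgue \<Omega> (\<lambda>x. u x * frechet_derivative \<phi> (at x) i)"
proof -
  have \<Omega>: "\<Omega> \<in> lmeasurable" "\<Omega> \<in> sets lebesgue"
    using assms(1,2) by (simp_all add: bounded_set_imp_lmeasurable)
  note gi = H1_with_grad_component_integrable[OF assms(1,2) u i]
  show "set_integrable lebesgue \<Omega> (\<lambda>x. (g x \<bullet> i) * \<phi> x)"
    using set_integrable_mult_continuous[OF \<Omega>(2) assms(2) gi test_fun_continuous(1)[OF \<phi>]] .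
  have "set_integrable lebesgue \<Omega> u"
    using u L2fun_imp_set_integrable[OF \<Omega>(1)] by (simp add: H1_with_grad_def)
  from set_integrable_mult_continuous[OF \<Omega>(2) assms(2) this test_fun_continuous(2)[OF \<phi> i]]
  show "set_integrable lebesgue \<Omega> (\<lambda>x. u x * frechet_derivative \<phi> (at x) i)" .
qed

lemma is_weak_grad_diff:
  assumes "open \<Omega>" "bounded \<Omega>" and u: "H1_with_grad \<Omega> u g" and v: "H1_with_grad \<Omega> v g'"
  shows "is_weak_grad \<Omega> (\<lambda>x. u x - v x) (\<lambda>x. g x - g' x)"
  unfolding is_weak_grad_def
proof (intro allI impI ballI)
  fix \<phi> and i :: 'a assume \<phi>: "test_fun \<Omega> \<phi>" and i: "i \<in> Basis"
  note U = H1_with_grad_test_integrable[OF assms(1,2) u i \<phi>]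
  note V = H1_with_grad_test_integrable[OF assms(1,2) v i \<phi>]
  have "(\<integral>x\<in>\<Omega>. (u x - v x) * frechet_derivative \<phi> (at x) i \<partial>lebesgue)
      = (\<integral>x\<in>\<Omega>. u x * frechet_derivative \<phi> (at x) i \<partial>lebesgue)
        - (\<integral>x\<in>\<Omega>. v x * frechet_derivative \<phi> (at x) i \<partial>lebesgue)"
    unfolding left_diff_distrib by (rule set_integral_diff(2)[OF U(2) V(2)])
  also have "\<dots> = - ((\<integral>x\<in>\<Omega>. (g x \<bullet> i) * \<phi> x \<partial>lebesgue) - (\<integral>x\<in>\<Omega>. (g' x \<bullet> i) * \<phi> x \<partial>lebesgue))"
    using u v \<phi> i by (simp add: H1_with_grad_def is_weak_grad_def)
  also have "\<dots> = - (\<integral>x\<in>\<Omega>. ((g x - g' x) \<bullet> i) * \<phi> x \<partial>lebesgue)"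
    unfolding inner_diff_left left_diff_distrib by (simp add: set_integral_diff(2)[OF U(1) V(1)])
  finally show "(\<integral>x\<in>\<Omega>. (u x - v x) * frechet_derivative \<phi> (at x) i \<partial>lebesgue)
      = - (\<integral>x\<in>\<Omega>. ((g x - g' x) \<bullet> i) * \<phi> x \<partial>lebesgue)" .
qed

lemma H1_with_grad_diff:
  assumes "open \<Omega>" "bounded \<Omega>" and u: "H1_with_grad \<Omega> u g" and v: "H1_with_grad \<Omega> v g'"
  shows "H1_with_grad \<Omega> (\<lambda>x. u x - v x) (\<lambda>x. g x - g' x)"
proof -
  have "L2fun \<Omega> (\<lambda>x. (g x - g' x) \<bullet> i)" if "i \<in> Basis" for i
    using u v that L2fun_diff[of \<Omega> "\<lambda>x. g x \<bullet> i" "\<lambda>x. g' x \<bullet> i"]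
    by (simp add: H1_with_grad_def inner_diff_left)
  with u v L2fun_diff[of \<Omega> u v] is_weak_grad_diff[OF assms] show ?thesis
    by (simp add: H1_with_grad_def)
qed

lemma weak_grad_unique:
  assumes "open \<Omega>" "bounded \<Omega>" and g1: "H1_with_grad \<Omega> u g1" and g2: "H1_with_grad \<Omega> u g2"
  shows "AE x in lebesgue. x \<in> \<Omega> \<longrightarrow> g1 x = g2 x"
proof -
  have "AE x in lebesgue. x \<in> \<Omega> \<longrightarrow> (g1 x - g2 x) \<bullet> i = 0" if i: "i \<in> Basis" for i
  proof (rule AE_eq_0_if_orthogonal_test_funs[OF \<open>open \<Omega>\<close>])
    show "set_integrable lebesgue \<Omega> (\<lambda>x. (g1 x - g2 x) \<bullet> i)"
      unfolding inner_diff_left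
      by (intro set_integral_diff(1) H1_with_grad_component_integrable[OF assms(1,2) g1 i]
            H1_with_grad_component_integrable[OF assms(1,2) g2 i])
    fix \<phi> assume "test_fun \<Omega> \<phi>"
    \<comment> \<open>\<open>g1 - g2\<close> is a weak gradient of \<open>u - u = 0\<close>\<close>
    then show "(\<integral>x\<in>\<Omega>. ((g1 x - g2 x) \<bullet> i) * \<phi> x \<partial>lebesgue) = 0"
      using is_weak_grad_diff[OF assms] i by (simp add: is_weak_grad_def)
  qed
  then have "AE x in lebesgue. \<forall>i\<in>Basis. x \<in> \<Omega> \<longrightarrow> (g1 x - g2 x) \<bullet> i = 0"
    by (intro AE_finite_allI) simp_all
  then show ?thesis
    by eventually_elim (auto intro: euclidean_eqI simp: inner_diff_left)
qed

lemma H1_with_wgrad: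
  assumes "u \<in> H10 \<Omega>"
  shows "H1_with_grad \<Omega> u (wgrad \<Omega> u)"
proof -
  obtain g where "H1_with_grad \<Omega> u g" using assms unfolding H10_def by blast
  then show ?thesis unfolding wgrad_def by (rule someI[of "H1_with_grad \<Omega> u"])
qed

lemma wgrad_diff:
  assumes "open \<Omega>" "bounded \<Omega>" and "p \<in> H10 \<Omega>" "q \<in> H10 \<Omega>" "(\<lambda>x. p x - q x) \<in> H10 \<Omega>"
  shows "AE x in lebesgue. x \<in> \<Omega> \<longrightarrow> wgrad \<Omega> (\<lambda>x. p x - q x) x = wgrad \<Omega> p x - wgrad \<Omega> q x"
  using weak_grad_unique[OF assms(1,2) H1_with_wgrad[OF assms(5)]
      H1_with_grad_diff[OF assms(1,2) H1_with_wgrad[OF assms(3)] H1_with_wgrad[OF assms(4)]]] .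

lemma H10_imp_L2fun:
  assumes "u \<in> H10 \<Omega>"
  shows "L2fun \<Omega> u"
  using H1_with_wgrad[OF assms] unfolding H1_with_grad_def by (elim conjE)

lemma H10_imp_L2fun_wgrad:
  assumes "u \<in> H10 \<Omega>" "i \<in> Basis"
  shows "L2fun \<Omega> (\<lambda>x. wgrad \<Omega> u x \<bullet> i)"
  using H1_with_wgrad[OF assms(1)] assms(2) unfolding H1_with_grad_def by (elim conjE) (rule bspec)

section \<open>Linearity of the energy form\<close>

locale bounded_coefficient =
  fixes \<Omega> :: "'a::euclidean_space set" and \<kappa> :: "'a \<Rightarrow> real"
  assumes open_domain: "open \<Omega>" and bounded_domain: "bounded \<Omega>"
    and coeff_measurable: "set_borel_measurable lebesgue \<Omega> \<kappa>"
    and coeff_bounded: "\<exists>M. AE x in lebesgue. x \<in> \<Omega> \<longrightarrow> \<bar>\<kappa> x\<bar> \<le> M"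
begin

lemma abil_integrable:
  assumes "u \<in> H10 \<Omega>" "v \<in> H10 \<Omega>"
  shows "set_integrable lebesgue \<Omega> (\<lambda>x. \<kappa> x * (wgrad \<Omega> u x \<bullet> wgrad \<Omega> v x))"
proof -
  obtain M where "AE x in lebesgue. x \<in> \<Omega> \<longrightarrow> \<bar>\<kappa> x\<bar> \<le> M"
    using coeff_bounded by blast
  with assms show ?thesis
    by (intro set_integrable_mult_bounded[OF _ coeff_measurable] set_integrable_inner_L2fun
        H10_imp_L2fun_wgrad)
qed

lemma abil_diff_left:
  assumes "p \<in> H10 \<Omega>" "q \<in> H10 \<Omega>" "(\<lambda>x. p x - q x) \<in> H10 \<Omega>" "v \<in> H10 \<Omega>"
  shows "abil \<Omega> \<kappa> (\<lambda>x. p x - q x) v = abil \<Omega> \<kappa> p v - abil \<Omega> \<kappa> q v"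
proof -
  have "abil \<Omega> \<kappa> (\<lambda>x. p x - q x) v
      = (\<integral>x\<in>\<Omega>. \<kappa> x * (wgrad \<Omega> p x \<bullet> wgrad \<Omega> v x) - \<kappa> x * (wgrad \<Omega> q x \<bullet> wgrad \<Omega> v x) \<partial>lebesgue)"
    unfolding abil_def
  proof (rule set_integral_cong_AE_integrable)
    show "AE x in lebesgue. x \<in> \<Omega> \<longrightarrow> \<kappa> x * (wgrad \<Omega> (\<lambda>x. p x - q x) x \<bullet> wgrad \<Omega> v x)
        = \<kappa> x * (wgrad \<Omega> p x \<bullet> wgrad \<Omega> v x) - \<kappa> x * (wgrad \<Omega> q x \<bullet> wgrad \<Omega> v x)"
      using wgrad_diff[OF open_domain bounded_domain assms(1-3)]
      by eventually_elim (simp add: inner_diff_left right_diff_distrib)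
  qed (intro abil_integrable set_integral_diff(1) assms)+
  also have "\<dots> = abil \<Omega> \<kappa> p v - abil \<Omega> \<kappa> q v"
    unfolding abil_def using assms by (intro set_integral_diff(2) abil_integrable)
  finally show ?thesis .
qed

lemma m_ip_diff_left:
  assumes "p \<in> H10 \<Omega>" "q \<in> H10 \<Omega>" "(\<lambda>x. p x - q x) \<in> H10 \<Omega>" "v \<in> H10 \<Omega>"
  shows "m_ip \<Omega> \<kappa> \<tau> (\<lambda>x. p x - q x) v = m_ip \<Omega> \<kappa> \<tau> p v - m_ip \<Omega> \<kappa> \<tau> q v"
proof -
  have "L2ip \<Omega> (\<lambda>x. p x - q x) v = L2ip \<Omega> p v - L2ip \<Omega> q v"
    using assms by (intro L2ip_diff_left H10_imp_L2fun)
  then show ?thesis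
    by (simp add: m_ip_def abil_diff_left[OF assms] right_diff_distrib)
qed

lemma m_ip_diff_self:
  assumes "p \<in> H10 \<Omega>" "q \<in> H10 \<Omega>" "(\<lambda>x. p x - q x) \<in> H10 \<Omega>"
  shows "m_ip \<Omega> \<kappa> \<tau> (\<lambda>x. p x - q x) (\<lambda>x. p x - q x)
    = m_ip \<Omega> \<kappa> \<tau> p p - 2 * m_ip \<Omega> \<kappa> \<tau> p q + m_ip \<Omega> \<kappa> \<tau> q q"
proof -
  have "m_ip \<Omega> \<kappa> \<tau> (\<lambda>x. p x - q x) (\<lambda>x. p x - q x)
      = m_ip \<Omega> \<kappa> \<tau> p (\<lambda>x. p x - q x) - m_ip \<Omega> \<kappa> \<tau> q (\<lambda>x. p x - q x)"
    by (rule m_ip_diff_left[OF assms assms(3)])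
  also have "\<dots> = m_ip \<Omega> \<kappa> \<tau> (\<lambda>x. p x - q x) p - m_ip \<Omega> \<kappa> \<tau> (\<lambda>x. p x - q x) q"
    unfolding m_ip_commute[of \<Omega> \<kappa> \<tau> p "\<lambda>x. p x - q x"]
      m_ip_commute[of \<Omega> \<kappa> \<tau> q "\<lambda>x. p x - q x"] ..
  also have "\<dots> = m_ip \<Omega> \<kappa> \<tau> p p - 2 * m_ip \<Omega> \<kappa> \<tau> p q + m_ip \<Omega> \<kappa> \<tau> q q"
    unfolding m_ip_diff_left[OF assms assms(1)] m_ip_diff_left[OF assms assms(2)]
      m_ip_commute[of \<Omega> \<kappa> \<tau> q p] by simp
  finally show ?thesis .
qed

end

section \<open>The splitting identity\<close>

lemma fun_subspace_add: "fun_subspace V \<Longrightarrow> u \<in> V \<Longrightarrow> v \<in> V \<Longrightarrow> (\<lambda>x. u x + v x) \<in> V"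
  by (simp add: fun_subspace_def)

lemma fun_subspace_diff:
  assumes "fun_subspace V" "u \<in> V" "v \<in> V"
  shows "(\<lambda>x. u x - v x) \<in> V"
proof -
  have add: "\<forall>u\<in>V. \<forall>v\<in>V. (\<lambda>x. u x + v x) \<in> V"
    and scale: "\<forall>c. \<forall>u\<in>V. (\<lambda>x. c * u x) \<in> V"
    using assms(1) unfolding fun_subspace_def by blast+
  have "(\<lambda>x. u x + (- 1) * v x) \<in> V"
    by (rule add[rule_format, OF \<open>u \<in> V\<close> scale[rule_format, OF \<open>v \<in> V\<close>]])
  then show ?thesis by simp
qed

context
  fixes \<Omega> :: "'a::euclidean_space set" and \<kappa> :: "'a \<Rightarrow> real" and \<tau> :: real
    and V :: "('a \<Rightarrow> real) set" and b :: "('a \<Rightarrow> real) \<Rightarrow> ('a \<Rightarrow> real)"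
  assumes b: "\<forall>v\<in>V. b v \<in> V \<and> (\<forall>w\<in>V. m_ip \<Omega> \<kappa> \<tau> (b v) w = L2ip \<Omega> v w)"
begin

lemma L2ip_b_commute:
  assumes "u \<in> V" "v \<in> V"
  shows "L2ip \<Omega> u (b v) = L2ip \<Omega> v (b u)"
proof -
  have "L2ip \<Omega> u (b v) = m_ip \<Omega> \<kappa> \<tau> (b u) (b v)" using b assms by simp
  also have "\<dots> = m_ip \<Omega> \<kappa> \<tau> (b v) (b u)" by (rule m_ip_commute)
  also have "\<dots> = L2ip \<Omega> v (b u)" using b assms by simp
  finally show ?thesis .
qed

lemma s_ip_add_self:
  assumes V: "fun_subspace V" "\<And>v. v \<in> V \<Longrightarrow> L2fun \<Omega> v" and "u \<in> V" "w \<in> V"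
  shows "s_ip \<Omega> \<kappa> \<tau> b (\<lambda>x. u x + w x) (\<lambda>x. u x + w x)
    = s_ip \<Omega> \<kappa> \<tau> b u u + 2 * s_ip \<Omega> \<kappa> \<tau> b u w + s_ip \<Omega> \<kappa> \<tau> b w w"
proof -
  define z where "z = (\<lambda>x. u x + w x)"
  have "z \<in> V" unfolding z_def using V(1) assms(3,4) by (rule fun_subspace_add)
  have L2ip_z: "L2ip \<Omega> z v = L2ip \<Omega> u v + L2ip \<Omega> w v" if "v \<in> V" for v
    unfolding z_def using that assms by (intro L2ip_add_left V(2))
  have m_ip_b: "m_ip \<Omega> \<kappa> \<tau> (b v) (b v') = L2ip \<Omega> v (b v')" if "v \<in> V" "v' \<in> V" for v v'
    using b that by simp
  have "b u \<in> V" "b w \<in> V" using b assms(3,4) by simp_all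
  have L2ip_zz: "L2ip \<Omega> z z = L2ip \<Omega> u u + 2 * L2ip \<Omega> u w + L2ip \<Omega> w w"
    using L2ip_z[OF \<open>z \<in> V\<close>] L2ip_z[OF \<open>u \<in> V\<close>] L2ip_z[OF \<open>w \<in> V\<close>]
      L2ip_commute[of \<Omega> u z] L2ip_commute[of \<Omega> w z] L2ip_commute[of \<Omega> w u]
    by simp
  have "m_ip \<Omega> \<kappa> \<tau> (b z) (b z) = L2ip \<Omega> u (b z) + L2ip \<Omega> w (b z)"
    using m_ip_b[OF \<open>z \<in> V\<close> \<open>z \<in> V\<close>] L2ip_z b \<open>z \<in> V\<close> by simp
  also have "\<dots> = L2ip \<Omega> z (b u) + L2ip \<Omega> z (b w)"
    by (simp only: L2ip_b_commute[OF \<open>u \<in> V\<close> \<open>z \<in> V\<close>] L2ip_b_commute[OF \<open>w \<in> V\<close> \<open>z \<in> V\<close>])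
  also have "\<dots> = L2ip \<Omega> u (b u) + 2 * L2ip \<Omega> u (b w) + L2ip \<Omega> w (b w)"
    using L2ip_z[OF \<open>b u \<in> V\<close>] L2ip_z[OF \<open>b w \<in> V\<close>] L2ip_b_commute[OF \<open>w \<in> V\<close> \<open>u \<in> V\<close>]
    by simp
  finally have "m_ip \<Omega> \<kappa> \<tau> (b z) (b z)
      = m_ip \<Omega> \<kappa> \<tau> (b u) (b u) + 2 * m_ip \<Omega> \<kappa> \<tau> (b u) (b w) + m_ip \<Omega> \<kappa> \<tau> (b w) (b w)"
    using m_ip_b[OF \<open>u \<in> V\<close> \<open>u \<in> V\<close>] m_ip_b[OF \<open>u \<in> V\<close> \<open>w \<in> V\<close>] m_ip_b[OF \<open>w \<in> V\<close> \<open>w \<in> V\<close>]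
    by simp
  with L2ip_zz show ?thesis
    unfolding s_ip_def z_def[symmetric] by simp
qed

lemma s_ip_d_eq_m_ip_c:
  assumes "u \<in> V"
    and c: "c f \<in> V" "\<forall>v\<in>V. m_ip \<Omega> \<kappa> \<tau> (c f) v = \<tau>^2 / 2 * abil \<Omega> \<kappa> f v"
    and d: "d f \<in> V" "\<forall>v\<in>V. abil \<Omega> \<kappa> (d f) v = abil \<Omega> \<kappa> f v"
  shows "s_ip \<Omega> \<kappa> \<tau> b u (d f) = m_ip \<Omega> \<kappa> \<tau> (b u) (c f)"
proof -
  have "b u \<in> V" using b \<open>u \<in> V\<close> by simp
  have "L2ip \<Omega> u (d f) = L2ip \<Omega> (b u) (d f) + \<tau>^2 / 2 * abil \<Omega> \<kappa> (b u) (d f)"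
    using b \<open>u \<in> V\<close> d(1) by (simp add: m_ip_def)
  moreover have "m_ip \<Omega> \<kappa> \<tau> (b u) (b (d f)) = L2ip \<Omega> (b u) (d f)"
    using b \<open>u \<in> V\<close> d(1) L2ip_b_commute[of u "d f"] L2ip_commute[of \<Omega> "d f"] by simp
  moreover have "abil \<Omega> \<kappa> (b u) (d f) = abil \<Omega> \<kappa> f (b u)"
    using d \<open>b u \<in> V\<close> abil_commute[of \<Omega> \<kappa> "b u"] by simp
  moreover have "m_ip \<Omega> \<kappa> \<tau> (b u) (c f) = \<tau>^2 / 2 * abil \<Omega> \<kappa> f (b u)"
    using c \<open>b u \<in> V\<close> m_ip_commute[of \<Omega> \<kappa> \<tau> "b u"] by simp
  ultimately show ?thesis by (simp add: s_ip_def)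
qed

end

theorem mainTheorem3:
  fixes \<Omega> :: "'a::euclidean_space set"
    and \<kappa> :: "'a \<Rightarrow> real" and \<kappa>0 \<tau> :: real
    and V1 V2 :: "('a \<Rightarrow> real) set"
    and b c d :: "('a \<Rightarrow> real) \<Rightarrow> ('a \<Rightarrow> real)"
  assumes dom: "open \<Omega>" "connected \<Omega>" "bounded \<Omega>" "\<Omega> \<noteq> {}"
    and kappa_meas: "set_borel_measurable lebesgue \<Omega> \<kappa>"
    and kappa_bdd: "\<exists>M. AE x in lebesgue. x \<in> \<Omega> \<longrightarrow> \<bar>\<kappa> x\<bar> \<le> M"
    and kappa0: "\<kappa>0 > 0" "AE x in lebesgue. x \<in> \<Omega> \<longrightarrow> \<kappa> x \<ge> \<kappa>0"
    and V1: "fun_subspace V1" "fin_dim_fun V1" "V1 \<subseteq> H10 \<Omega>"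
    and V2: "fun_subspace V2" "fin_dim_fun V2" "V2 \<subseteq> H10 \<Omega>"
    and orth: "\<forall>v1\<in>V1. \<forall>v2\<in>V2. L2ip \<Omega> v1 v2 = 0"
    and tau: "\<tau> > 0"
    and b_def: "\<forall>v1\<in>V1. b v1 \<in> V1 \<and> (\<forall>v\<in>V1. m_ip \<Omega> \<kappa> \<tau> (b v1) v = L2ip \<Omega> v1 v)"
    and c_def: "\<forall>u\<in>sum_space V1 V2. c u \<in> V1 \<and>
                  (\<forall>v\<in>V1. m_ip \<Omega> \<kappa> \<tau> (c u) v = \<tau>^2 / 2 * abil \<Omega> \<kappa> u v)"
    and d_def: "\<forall>u\<in>sum_space V1 V2. d u \<in> V1 \<and>
                  (\<forall>v\<in>V1. abil \<Omega> \<kappa> (d u) v = abil \<Omega> \<kappa> u v)"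
    and u1: "u1 \<in> V1" and u2: "u2 \<in> V2"
  shows "L2ip \<Omega> u1 u1 + \<tau>^2 / 2 * abil \<Omega> \<kappa> u2 u2
           - m_ip \<Omega> \<kappa> \<tau> (\<lambda>x. b u1 x - c u2 x) (\<lambda>x. b u1 x - c u2 x)
         = s_ip \<Omega> \<kappa> \<tau> b (\<lambda>x. u1 x + d u2 x) (\<lambda>x. u1 x + d u2 x)
           + n_sq \<Omega> \<kappa> \<tau> b c d u2"
proof -
  interpret bounded_coefficient \<Omega> \<kappa>
    using dom(1,3) kappa_meas kappa_bdd by (rule bounded_coefficient.intro)
  have "(\<lambda>x. 0) \<in> V1" using V1(1) by (simp add: fun_subspace_def)
  then have "u2 \<in> sum_space V1 V2"
    unfolding sum_space_def using u2 by (intro CollectI exI[of _ "\<lambda>x. 0"] exI[of _ u2]) simp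
  then have c: "c u2 \<in> V1" "\<forall>v\<in>V1. m_ip \<Omega> \<kappa> \<tau> (c u2) v = \<tau>^2 / 2 * abil \<Omega> \<kappa> u2 v"
    and d: "d u2 \<in> V1" "\<forall>v\<in>V1. abil \<Omega> \<kappa> (d u2) v = abil \<Omega> \<kappa> u2 v"
    using c_def d_def by auto
  have "b u1 \<in> V1" using b_def u1 by simp
  have "m_ip \<Omega> \<kappa> \<tau> (\<lambda>x. b u1 x - c u2 x) (\<lambda>x. b u1 x - c u2 x) = m_ip \<Omega> \<kappa> \<tau> (b u1) (b u1)
      - 2 * m_ip \<Omega> \<kappa> \<tau> (b u1) (c u2) + m_ip \<Omega> \<kappa> \<tau> (c u2) (c u2)"
    using V1(3) \<open>b u1 \<in> V1\<close> c(1) fun_subspace_diff[OF V1(1) \<open>b u1 \<in> V1\<close> c(1)]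
    by (intro m_ip_diff_self) auto
  moreover have "s_ip \<Omega> \<kappa> \<tau> b (\<lambda>x. u1 x + d u2 x) (\<lambda>x. u1 x + d u2 x) = s_ip \<Omega> \<kappa> \<tau> b u1 u1
      + 2 * s_ip \<Omega> \<kappa> \<tau> b u1 (d u2) + s_ip \<Omega> \<kappa> \<tau> b (d u2) (d u2)"
    using V1(1,3) u1 d(1) by (intro s_ip_add_self[OF b_def] H10_imp_L2fun) auto
  moreover have "s_ip \<Omega> \<kappa> \<tau> b u1 (d u2) = m_ip \<Omega> \<kappa> \<tau> (b u1) (c u2)"
    using u1 c d by (rule s_ip_d_eq_m_ip_c[OF b_def])
  ultimately show ?thesis
    unfolding n_sq_def s_ip_def by argo
qed

end
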